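(* Let $h>0$ and let $f:[0,h]\to\mathbb{R}^n$ be a Lipschitz function satisfying $\frac{|f(h)-f(0)|}{h}=A\ge2$. Then $$\int_0^h x\,(|f'(x)|^2-1)^2\,dx\ge h^2\frac{A^4}{16}.$$ *)

theory Defs
  imports "HOL-Analysis.Analysis"
begin

end

theory Submission
  imports Defs
begin

(* Let u be the unit vector in the direction of f h - f 0. The scalar function \<psi> = f \<bullet> u is
   Lipschitz, its derivative \<psi>' is bounded by |f'| almost everywhere and integrates to A h^2 over
   [0, h]. The substitution x = h w^6 turns the elementary inequality defect_lower_bound into the
   pointwise bound
     x (|f'|^2 - 1)^2 \<ge> (A^3 h / 4) \<psi>' - A^4 h^(3/2) / (16 sqrt x) - A^4 h / 32 - x,
   whose right-hand side integrates to 3 A^4 h^2 / 32 - h^2 / 2 \<ge> A^4 h^2 / 16 when A \<ge> 2.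

   Almost everywhere differentiability of a Lipschitz function \<psi> is obtained from the
   Radon-Nikodym theorem: F x = \<psi> x + (L + 1) x is increasing and bi-Lipschitz, so the image of
   Lebesgue measure under its inverse is absolutely continuous, and Lebesgue's differentiation
   theorem identifies its density with F'. *)

lemma expanding_continuous_surj:
  fixes F :: "real \<Rightarrow> real"
  assumes cont: "continuous_on UNIV F"
    and expanding: "\<And>x y. x \<le> y \<Longrightarrow> y - x \<le> F y - F x"
  shows "surj F"
proof -
  have "c \<in> range F" for c
  proof -
    define r where "r = \<bar>c - F 0\<bar>"
    have "F (-r) \<le> c" "c \<le> F r" "-r \<le> r"
      using expanding[of "-r" 0] expanding[of 0 r] by (auto simp: r_def)
    then show ?thesis
      using IVT'[of F "-r" c r] cont by (auto intro: continuous_on_subset)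
  qed
  then show ?thesis by auto
qed

lemma has_integral_enn2real_density:
  fixes f :: "'a::euclidean_space \<Rightarrow> ennreal"
  assumes f: "f \<in> borel_measurable lborel" and S: "S \<in> sets lborel"
    and emeasure_S: "emeasure (density lborel f) S = ennreal r" and "0 \<le> r"
  shows "((\<lambda>x. enn2real (f x)) has_integral r) S"
proof -
  have fS: "(\<integral>\<^sup>+ x. f x * indicator S x \<partial>lborel) = ennreal r"
    using emeasure_S emeasure_density[OF f S] by simp
  have "AE x in lborel. f x * indicator S x \<noteq> \<infinity>"
    by (rule nn_integral_PInf_AE) (use f S fS in auto)
  then have "AE x in lborel. ennreal (enn2real (f x) * indicator S x) = f x * indicator S x"
    by eventually_elim (auto simp: indicator_def ennreal_enn2real_if)
  then have "(\<integral>\<^sup>+ x. ennreal (enn2real (f x) * indicator S x) \<partial>lborel) = ennreal r"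
    using fS by (simp add: nn_integral_cong_AE)
  then have "((\<lambda>x. enn2real (f x) * indicator S x) has_integral r) UNIV"
    by (intro nn_integral_has_integral) (use f S \<open>0 \<le> r\<close> in auto)
  then show ?thesis
    by (simp only: indicator_times_eq_if(2)[of "\<lambda>x. enn2real (f x)"] has_integral_restrict_UNIV)
qed

lemma lipschitz_inverse_distr_absolutely_continuous:
  fixes F G :: "'a::euclidean_space \<Rightarrow> 'a"
  assumes lip: "K-lipschitz_on UNIV F" and G_meas: "G \<in> borel_measurable borel"
    and vimage_G: "\<And>S. G -` S = F ` S"
  shows "absolutely_continuous lborel (distr lborel borel G)"
  unfolding absolutely_continuous_def
proof
  fix S :: "'a set" assume S: "S \<in> null_sets lborel"
  then have "negligible S"
    using null_sets_completionI negligible_iff_null_sets by blast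
  then have "negligible (F ` S)"
    using lipschitz_onD[OF lip]
    by (intro negligible_locally_Lipschitz_image[OF order_refl])
       (auto intro!: exI[of _ UNIV] exI[of _ K] simp: dist_norm)
  moreover have "F ` S \<in> sets borel"
    using measurable_sets[OF G_meas, of S] S vimage_G by auto
  ultimately have "F ` S \<in> null_sets lborel"
    by (simp add: negligible_iff_null_sets null_sets_completion_iff)
  then show "S \<in> null_sets (distr lborel borel G)"
    using S G_meas vimage_G[of S] by (auto simp: null_sets_def emeasure_distr)
qed

lemma expanding_lipschitz_has_density:
  fixes F :: "real \<Rightarrow> real"
  assumes lip: "K-lipschitz_on UNIV F"
    and expanding: "\<And>x y. x \<le> y \<Longrightarrow> y - x \<le> F y - F x"
  obtains g where "\<And>x. 0 \<le> g x" "\<And>a b. a \<le> b \<Longrightarrow> (g has_integral F b - F a) {a..b}"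
proof -
  have F_le_iff: "F x \<le> F y \<longleftrightarrow> x \<le> y" for x y
    using expanding[of x y] expanding[of y x] by (cases "x \<le> y") auto
  have "surj F"
    by (rule expanding_continuous_surj[OF lipschitz_on_continuous_on[OF lip] expanding])
  define G where "G = inv F"
  have FG: "F (G y) = y" for y
    using surj_f_inv_f[OF \<open>surj F\<close>] by (simp add: G_def)
  have GF: "G (F x) = x" for x
    using F_le_iff FG by (metis order_antisym order_refl)
  have G_meas: "G \<in> borel_measurable borel"
    by (rule borel_measurable_mono, rule monoI) (metis FG F_le_iff)
  have vimage_G: "G -` S = F ` S" for S
    by (auto simp: image_def) (metis FG, metis GF)
  define \<mu> where "\<mu> = distr lborel borel G"
  have "absolutely_continuous lborel \<mu>"
    unfolding \<mu>_def using lip G_meas vimage_G by (rule lipschitz_inverse_distr_absolutely_continuous)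
  then have "\<exists>f \<in> borel_measurable lborel. density lborel f = \<mu>"
    by (rule sigma_finite_measure.Radon_Nikodym[OF sigma_finite_lborel]) (simp add: \<mu>_def)
  then obtain f where f: "f \<in> borel_measurable lborel" and dens: "density lborel f = \<mu>"
    by blast
  have "((\<lambda>x. enn2real (f x)) has_integral F b - F a) {a..b}" if "a \<le> b" for a b
  proof (rule has_integral_enn2real_density[OF f])
    have "G -` {a..b} = {F a..F b}"
      using F_le_iff FG by (auto simp: vimage_def) (metis FG F_le_iff)+
    then show "emeasure (density lborel f) {a..b} = ennreal (F b - F a)"
      using that G_meas F_le_iff by (simp add: dens \<mu>_def emeasure_distr)
  qed (use that in \<open>auto simp: F_le_iff\<close>)
  then show thesis
    using that[of "\<lambda>x. enn2real (f x)"] by simp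
qed

lemma indefinite_integral_right_derivative_ae:
  fixes F g :: "real \<Rightarrow> real"
  assumes F: "\<And>a b. a \<le> b \<Longrightarrow> (g has_integral F b - F a) {a..b}"
  obtains N where "negligible N"
    "\<And>x. x \<notin> N \<Longrightarrow> ((\<lambda>y. (F y - F x) / (y - x)) \<longlongrightarrow> g x) (at_right x)"
proof -
  have "g integrable_on cbox a b" for a b
    using F[of a b] by (cases "a \<le> b") (auto simp: integrable_on_def)
  then obtain N where N: "negligible N"
    "\<And>x e. \<lbrakk>x \<notin> N; 0 < e\<rbrakk> \<Longrightarrow> \<exists>d>0. \<forall>k. 0 < k \<and> k < d \<longrightarrow>
       norm (integral (cbox x (x + k *\<^sub>R One)) g /\<^sub>R k ^ DIM(real) - g x) < e"
    using integrable_ccontinuous_explicit by blast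
  show ?thesis
  proof (rule that[OF N(1)])
    fix x assume x: "x \<notin> N"
    show "((\<lambda>y. (F y - F x) / (y - x)) \<longlongrightarrow> g x) (at_right x)"
    proof (rule tendstoI)
      fix e :: real assume "0 < e"
      then obtain d where d: "0 < d" "\<And>k. 0 < k \<and> k < d \<Longrightarrow>
          norm (integral (cbox x (x + k *\<^sub>R One)) g /\<^sub>R k ^ DIM(real) - g x) < e"
        using N(2)[OF x] by blast
      have "dist ((F y - F x) / (y - x)) (g x) < e" if "x < y" "y < x + d" for y
      proof -
        have "integral {x..y} g = F y - F x"
          using F[of x y] that by (simp add: integral_unique)
        then show ?thesis
          using d(2)[of "y - x"] that by (simp add: dist_real_def divide_inverse mult.commute)
      qed
      then show "\<forall>\<^sub>F y in at_right x. dist ((F y - F x) / (y - x)) (g x) < e"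
        unfolding eventually_at_right_field using d(1) by (intro exI[of _ "x + d"]) auto
    qed
  qed
qed

lemma indefinite_integral_has_derivative_ae:
  fixes F g :: "real \<Rightarrow> real"
  assumes F: "\<And>a b. a \<le> b \<Longrightarrow> (g has_integral F b - F a) {a..b}"
  obtains N where "negligible N" "\<And>x. x \<notin> N \<Longrightarrow> (F has_real_derivative g x) (at x)"
proof -
  obtain N1 where N1: "negligible N1"
    "\<And>x. x \<notin> N1 \<Longrightarrow> ((\<lambda>y. (F y - F x) / (y - x)) \<longlongrightarrow> g x) (at_right x)"
    using indefinite_integral_right_derivative_ae[OF F] by blast
  \<comment> \<open>Left difference quotients of F at x are right ones of t \<mapsto> - F (- t) at - x.\<close>
  have F_reflect: "((\<lambda>t. g (- t)) has_integral - F (- b) - - F (- a)) {a..b}" if "a \<le> b" for a b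
    using F[of "- b" "- a"] that has_integral_reflect_real[where f=g and a="- b" and b="- a"]
    by simp
  obtain N2 where N2: "negligible N2"
    "\<And>x. x \<notin> N2 \<Longrightarrow> ((\<lambda>y. (- F (- y) - - F (- x)) / (y - x)) \<longlongrightarrow> g (- x)) (at_right x)"
    using indefinite_integral_right_derivative_ae[OF F_reflect] by blast
  show ?thesis
  proof (rule that)
    show "negligible (N1 \<union> uminus ` N2)"
      using N1(1) N2(1) by (auto intro!: negligible_differentiable_image_negligible)
  next
    fix x assume "x \<notin> N1 \<union> uminus ` N2"
    then have "x \<notin> N1" "- x \<notin> N2"
      by (auto simp: image_iff)
    have "(- F (- y) - - F (- (- x))) / (y - (- x)) = (F (- y) - F x) / (- y - x)" for y
      by (simp add: minus_divide_divide[of "F (- y) - F x", symmetric] algebra_simps)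
    then have "((\<lambda>y. (F (- y) - F x) / (- y - x)) \<longlongrightarrow> g x) (at_right (- x))"
      using N2(2)[OF \<open>- x \<notin> N2\<close>] by simp
    then have "((\<lambda>y. (F y - F x) / (y - x)) \<longlongrightarrow> g x) (at_left x)"
      by (simp add: filterlim_at_left_to_right)
    then have "((\<lambda>y. (F y - F x) / (y - x)) \<longlongrightarrow> g x) (at x)"
      using N1(2)[OF \<open>x \<notin> N1\<close>] by (simp add: filterlim_at_split)
    then show "(F has_real_derivative g x) (at x)"
      by (rule has_field_derivative_iff[THEN iffD2])
  qed
qed

lemma lipschitz_has_real_derivative_ae:
  fixes \<psi> :: "real \<Rightarrow> real"
  assumes lip: "L-lipschitz_on UNIV \<psi>"
  obtains N g where "negligible N" "\<And>x. x \<notin> N \<Longrightarrow> (\<psi> has_real_derivative g x) (at x)"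
    "\<And>a b. a \<le> b \<Longrightarrow> (g has_integral \<psi> b - \<psi> a) {a..b}"
    "\<And>a b. g absolutely_integrable_on {a..b}"
proof -
  define K where "K = L + 1"
  define F where "F x = \<psi> x + K * x" for x
  have "(L + \<bar>K\<bar> * 1)-lipschitz_on UNIV F"
    unfolding F_def by (intro lipschitz_on_add lip lipschitz_on_cmult_real lipschitz_on_id)
  moreover have "y - x \<le> F y - F x" if "x \<le> y" for x y
    using lipschitz_onD[OF lip, of y x] that by (simp add: F_def K_def dist_real_def algebra_simps)
  ultimately obtain g0 where g0_nonneg: "\<And>x. 0 \<le> g0 x"
    and g0: "\<And>a b. a \<le> b \<Longrightarrow> (g0 has_integral F b - F a) {a..b}"
    using expanding_lipschitz_has_density by blast
  obtain N where N: "negligible N" "\<And>x. x \<notin> N \<Longrightarrow> (F has_real_derivative g0 x) (at x)"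
    using indefinite_integral_has_derivative_ae[OF g0] by blast
  show ?thesis
  proof (rule that[of N "\<lambda>x. g0 x - K"])
    fix x assume "x \<notin> N"
    have "((\<lambda>y. F y - K * y) has_real_derivative g0 x - K * 1) (at x)"
      by (intro DERIV_diff N(2)[OF \<open>x \<notin> N\<close>] DERIV_cmult DERIV_ident)
    then show "(\<psi> has_real_derivative g0 x - K) (at x)"
      by (simp add: F_def)
  next
    fix a b :: real assume "a \<le> b"
    then have "((\<lambda>x. g0 x - K) has_integral (F b - F a) - K * (b - a)) {a..b}"
      using has_integral_const_real[of K a b]
      by (intro has_integral_diff g0) (simp_all add: mult.commute)
    then show "((\<lambda>x. g0 x - K) has_integral \<psi> b - \<psi> a) {a..b}"
      by (simp add: F_def algebra_simps)
  next
    fix a b :: real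
    have "g0 integrable_on {a..b}"
      using g0[of a b] by (cases "a \<le> b") (auto simp: integrable_on_def)
    then have "g0 absolutely_integrable_on {a..b}"
      using g0_nonneg by (intro nonnegative_absolutely_integrable_1)
    then show "(\<lambda>x. g0 x - K) absolutely_integrable_on {a..b}"
      using absolutely_integrable_continuous_real[OF continuous_on_const, of a b K]
      by (intro set_integral_diff) auto
  qed (rule N(1))
qed

lemma lipschitz_on_inner_left:
  assumes lip: "L-lipschitz_on S f" and v: "norm v \<le> 1"
  shows "L-lipschitz_on S (\<lambda>t. f t \<bullet> v)"
proof (rule lipschitz_onI)
  fix x y assume "x \<in> S" "y \<in> S"
  have "\<bar>f x \<bullet> v - f y \<bullet> v\<bar> \<le> norm (f x - f y) * norm v"
    using Cauchy_Schwarz_ineq2[of "f x - f y" v] by (simp add: inner_diff_left)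
  also have "\<dots> \<le> L * dist x y"
    using lipschitz_onD[OF lip \<open>x \<in> S\<close> \<open>y \<in> S\<close>] v
    by (simp add: dist_norm mult_left_le order_trans[OF mult_left_le])
  finally show "dist (f x \<bullet> v) (f y \<bullet> v) \<le> L * dist x y"
    by (simp add: dist_real_def)
qed (rule lipschitz_on_nonneg[OF lip])

lemma lipschitz_differentiable_ae:
  fixes f :: "real \<Rightarrow> 'a::euclidean_space"
  assumes lip: "L-lipschitz_on UNIV f"
  obtains N where "negligible N" "\<And>x. x \<notin> N \<Longrightarrow> f differentiable (at x)"
proof -
  have "\<exists>N. negligible N \<and> (\<forall>x. x \<notin> N \<longrightarrow> (\<lambda>t. f t \<bullet> i) differentiable (at x))"
    if "i \<in> Basis" for i
  proof -
    have "norm i \<le> 1"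
      using that by simp
    then obtain g N where "negligible N" "\<And>x. x \<notin> N \<Longrightarrow> ((\<lambda>t. f t \<bullet> i) has_real_derivative g x) (at x)"
      using lipschitz_has_real_derivative_ae[OF lipschitz_on_inner_left[OF lip]] by metis
    then show ?thesis
      by (auto simp: real_differentiable_def)
  qed
  then obtain N where N: "\<And>i. i \<in> Basis \<Longrightarrow> negligible (N i)"
    "\<And>i x. i \<in> Basis \<Longrightarrow> x \<notin> N i \<Longrightarrow> (\<lambda>t. f t \<bullet> i) differentiable (at x)"
    by metis
  show ?thesis
  proof (rule that[of "\<Union>i\<in>Basis. N i"])
    show "negligible (\<Union>i\<in>Basis. N i)"
      using N(1) by (auto intro!: negligible_Union)
  qed (use N(2) in \<open>auto simp: differentiable_componentwise_within[of f]\<close>)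
qed

lemma lipschitz_on_clamp_extension:
  fixes f :: "real \<Rightarrow> 'a::metric_space"
  assumes lip: "L-lipschitz_on {a..b} f" and "a \<le> b"
  shows "L-lipschitz_on UNIV (f \<circ> clamp a b)"
proof -
  have "(L * 1)-lipschitz_on UNIV (f \<circ> clamp a b)"
  proof (rule lipschitz_on_compose)
    show "1-lipschitz_on UNIV (clamp a b)"
      by (rule lipschitz_onI) (auto simp: dist_clamps_le_dist_args)
    show "L-lipschitz_on (range (clamp a b)) f"
      using \<open>a \<le> b\<close> clamp_in_interval[of a b]
      by (intro lipschitz_on_subset[OF lip]) (auto simp: cbox_interval)
  qed
  then show ?thesis by simp
qed

lemma lipschitz_directional_derivative_ae:
  fixes f :: "real \<Rightarrow> 'a::euclidean_space"
  assumes lip: "L-lipschitz_on {a..b} f" and "a \<le> b" and u: "norm u \<le> 1"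
  obtains N g where "negligible N" "(g has_integral (f b - f a) \<bullet> u) {a..b}"
    "g absolutely_integrable_on {a..b}"
    "\<And>x. x \<in> {a<..<b} - N \<Longrightarrow> g x \<le> norm (vector_derivative f (at x within {a..b}))"
proof -
  define fe where "fe = f \<circ> clamp a b"
  have lip_fe: "L-lipschitz_on UNIV fe"
    unfolding fe_def using lip \<open>a \<le> b\<close> by (rule lipschitz_on_clamp_extension)
  have fe_eq: "fe t = f t" if "t \<in> {a..b}" for t
    using that by (simp add: fe_def)
  obtain N1 where N1: "negligible N1" "\<And>x. x \<notin> N1 \<Longrightarrow> fe differentiable (at x)"
    using lipschitz_differentiable_ae[OF lip_fe] by blast
  obtain N2 g where N2: "negligible N2"
    and g_deriv: "\<And>x. x \<notin> N2 \<Longrightarrow> ((\<lambda>t. fe t \<bullet> u) has_real_derivative g x) (at x)"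
    and g_int: "\<And>a b. a \<le> b \<Longrightarrow> (g has_integral fe b \<bullet> u - fe a \<bullet> u) {a..b}"
    and g_abs: "\<And>a b. g absolutely_integrable_on {a..b}"
    by (rule lipschitz_has_real_derivative_ae[OF lipschitz_on_inner_left[OF lip_fe u]]) blast
  show ?thesis
  proof (rule that[of "N1 \<union> N2" g])
    show "(g has_integral (f b - f a) \<bullet> u) {a..b}"
      using g_int[OF \<open>a \<le> b\<close>] \<open>a \<le> b\<close> by (simp add: fe_eq inner_diff_left)
  next
    fix x assume x: "x \<in> {a<..<b} - (N1 \<union> N2)"
    define D where "D = vector_derivative fe (at x)"
    have fe_D: "(fe has_vector_derivative D) (at x)"
      using N1(2) x by (auto simp: D_def vector_derivative_works)
    have x_ab: "x \<in> {a..b}" "a < b"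
      using x by auto
    have "(f has_vector_derivative D) (at x within {a..b})"
      by (rule has_vector_derivative_transform[OF x_ab(1) fe_eq[symmetric] has_vector_derivative_at_within[OF fe_D]])
    then have "vector_derivative f (at x within {a..b}) = D"
      by (rule vector_derivative_within_closed_interval[OF x_ab(2,1)])
    have "((\<lambda>t. fe t \<bullet> u) has_real_derivative D \<bullet> u) (at x)"
      using bounded_linear.has_vector_derivative[OF bounded_linear_inner_left fe_D]
      by (simp add: has_real_derivative_iff_has_vector_derivative)
    then have "g x = D \<bullet> u"
      using g_deriv x by (blast intro: DERIV_unique)
    also have "\<dots> \<le> norm D * norm u"
      by (rule order_trans[OF abs_ge_self Cauchy_Schwarz_ineq2])
    also have "\<dots> \<le> norm D"
      using u by (simp add: mult_left_le)
    finally show "g x \<le> norm (vector_derivative f (at x within {a..b}))"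
      using \<open>vector_derivative f (at x within {a..b}) = D\<close> by simp
  qed (simp_all add: N1(1) N2(1) g_abs)
qed

lemma defect_lower_bound:
  fixes w y A :: real
  assumes w: "0 < w" and y: "0 \<le> y" and A: "0 < A"
  shows "A^3 / 4 * y - A^4 / (16 * w^3) - A^4 / 32 - w^6 \<le> w^6 * (y^2 - 1)^2"
proof -
  define v where "v = w^2 * y / A"
  have quartic: "y^4 / 2 - 1 \<le> (y^2 - 1)^2"
  proof -
    have "(y^2 - 1)^2 - (y^4 / 2 - 1) = (y^2 - 2)^2 / 2"
      by (simp add: algebra_simps power2_eq_square power4_eq_xxxx)
    moreover have "0 \<le> (y^2 - 2)^2 / 2"
      by simp
    ultimately show ?thesis by linarith
  qed
  have tangent_v: "v / 2 \<le> v^4 + 3/16"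
  proof -
    have "v^4 + 3/16 - v/2 = (v - 1/2)^2 * ((v + 1/2)^2 + 1/2)"
      by (simp add: algebra_simps power2_eq_square power4_eq_xxxx)
    moreover have "0 \<le> (v - 1/2)^2 * ((v + 1/2)^2 + 1/2)"
      by simp
    ultimately show ?thesis by linarith
  qed
  have tangent_w: "3 / (16 * w^2) \<le> 1 / (8 * w^3) + 1/16"
  proof -
    have "1 / (8 * w^3) + 1/16 - 3 / (16 * w^2) = (w - 1)^2 * (w + 2) / (16 * w^3)"
      using w by (simp add: field_simps power2_eq_square power3_eq_cube)
    moreover have "0 \<le> (w - 1)^2 * (w + 2) / (16 * w^3)"
      using w by simp
    ultimately show ?thesis by linarith
  qed
  have "A^3 * y / 2 - A^4 * (3 / (16 * w^2)) = A^4 * (v / 2 - 3/16) / w^2"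
    using w A by (simp add: v_def field_simps power2_eq_square power3_eq_cube power4_eq_xxxx)
  also have "\<dots> \<le> A^4 * v^4 / w^2"
    using tangent_v w A by (intro divide_right_mono mult_left_mono) auto
  also have "\<dots> = w^6 * y^4"
    using w A by (simp add: v_def field_simps)
  finally have "A^3 * y / 2 - A^4 / (8 * w^3) - A^4 / 16 \<le> w^6 * y^4"
    using mult_left_mono[OF tangent_w, of "A^4"] by (simp add: algebra_simps)
  moreover have "w^6 * (y^4 / 2 - 1) \<le> w^6 * (y^2 - 1)^2"
    using quartic w by (intro mult_left_mono) auto
  ultimately show ?thesis
    by (simp add: algebra_simps)
qed

lemma weighted_defect_lower_bound:
  fixes x h A q y :: real
  assumes x: "0 < x" and h: "0 < h" and A: "0 < A" and y: "0 \<le> y" and q: "q \<le> y"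
  shows "A^3 * h / 4 * q - (A^4 * h / 16 * sqrt h / sqrt x + A^4 * h / 32 + x) \<le> x * (y^2 - 1)^2"
proof -
  define w where "w = root 6 (x / h)"
  have w: "0 < w" "w^6 = x / h"
    using x h by (simp_all add: w_def real_root_pow_pos2)
  have x_eq: "x = h * w^6"
    using w h by simp
  have "sqrt x = sqrt h * sqrt ((w^3)^2)"
    by (simp add: x_eq real_sqrt_mult flip: power_mult)
  then have sqrt_x: "sqrt x = sqrt h * w^3"
    using w(1) by (metis real_sqrt_abs abs_of_pos zero_less_power)
  have err: "A^4 * h / 16 * sqrt h / sqrt x = h * (A^4 / (16 * w^3))"
    using h w(1) by (simp add: sqrt_x field_simps)
  have "A^3 * h / 4 * q - (A^4 * h / 16 * sqrt h / sqrt x + A^4 * h / 32 + x)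
      \<le> A^3 * h / 4 * y - (A^4 * h / 16 * sqrt h / sqrt x + A^4 * h / 32 + x)"
    using q h A by (simp add: mult_left_mono)
  also have "\<dots> = h * (A^3 / 4 * y - A^4 / (16 * w^3) - A^4 / 32 - w^6)"
    unfolding err by (simp add: x_eq algebra_simps)
  also have "\<dots> \<le> h * (w^6 * (y^2 - 1)^2)"
    using defect_lower_bound[OF w(1) y A] h by (intro mult_left_mono) auto
  finally show ?thesis
    by (simp add: x_eq)
qed

lemma has_integral_inverse_sqrt_plus_linear:
  fixes c d h :: real
  assumes "0 \<le> h"
  shows "((\<lambda>x. c * sqrt h / sqrt x + d + x) has_integral 2 * c * h + d * h + h^2 / 2) {0..h}"
proof -
  define E where "E t = 2 * c * (sqrt h * sqrt t) + d * t + t^2 / 2" for t :: real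
  have "((\<lambda>x. c * sqrt h / sqrt x + d + x) has_integral E h - E 0) {0..h}"
  proof (rule fundamental_theorem_of_calculus_interior[OF assms])
    show "continuous_on {0..h} E"
      unfolding E_def by (intro continuous_intros) auto
    fix t :: real assume "t \<in> {0<..<h}"
    then have "(E has_real_derivative c * sqrt h / sqrt t + d + t) (at t)"
      unfolding E_def by (auto intro!: derivative_eq_intros simp: field_simps)
    then show "(E has_vector_derivative c * sqrt h / sqrt t + d + t) (at t)"
      by (simp add: has_real_derivative_iff_has_vector_derivative)
  qed
  then show ?thesis
    using assms by (simp add: E_def)
qed

lemma has_integral_le_nn_set_integral:
  fixes l \<phi> :: "'a::euclidean_space \<Rightarrow> real"
  assumes l_abs: "l absolutely_integrable_on S" and l_int: "(l has_integral I) S"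
    and le: "AE x in lebesgue. x \<in> S \<longrightarrow> l x \<le> \<phi> x"
  shows "ennreal I \<le> (\<integral>\<^sup>+ x \<in> S. ennreal (\<phi> x) \<partial>lebesgue)"
proof -
  define P where "P = (\<integral>\<^sup>+ x. ennreal (indicator S x *\<^sub>R l x) \<partial>lebesgue)"
  have "I = (LINT x:S|lebesgue. l x)"
    using set_lebesgue_integral_eq_integral(2)[OF l_abs] l_int by (simp add: integral_unique)
  also have "\<dots> = enn2real P - enn2real (\<integral>\<^sup>+ x. ennreal (- (indicator S x *\<^sub>R l x)) \<partial>lebesgue)"
    unfolding set_lebesgue_integral_def P_def
    by (rule real_lebesgue_integral_def) (use l_abs in \<open>simp add: set_integrable_def\<close>)
  also have "\<dots> \<le> enn2real P"
    by simp
  finally have "ennreal I \<le> ennreal (enn2real P)"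
    by (rule ennreal_leI)
  also have "\<dots> \<le> P"
    by (simp add: ennreal_enn2real_if)
  also have "P \<le> (\<integral>\<^sup>+ x \<in> S. ennreal (\<phi> x) \<partial>lebesgue)"
    unfolding P_def
    by (rule nn_integral_mono_AE) (use le in \<open>auto simp: indicator_def ennreal_leI\<close>)
  finally show ?thesis .
qed

lemma majorant_defect_integral_lower_bound:
  fixes g \<Phi> :: "real \<Rightarrow> real" and h A :: real
  assumes "0 < h" and A_pos: "0 < A" and "negligible N"
    and g_int: "(g has_integral A * h) {0..h}" and g_abs: "g absolutely_integrable_on {0..h}"
    and g_le: "\<And>x. x \<in> {0<..<h} - N \<Longrightarrow> g x \<le> \<Phi> x" and \<Phi>_nonneg: "\<And>x. 0 \<le> \<Phi> x"
  shows "ennreal (3 * A^4 * h^2 / 32 - h^2 / 2) \<le> (\<integral>\<^sup>+ x \<in> {0..h}. ennreal (x * ((\<Phi> x)\<^sup>2 - 1)\<^sup>2) \<partial>lebesgue)"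
proof -
  define e where "e = (\<lambda>x. A^4 * h / 16 * sqrt h / sqrt x + A^4 * h / 32 + x)"
  define l where "l = (\<lambda>x. A^3 * h / 4 * g x - e x)"
  have e_int: "(e has_integral 2 * (A^4 * h / 16) * h + A^4 * h / 32 * h + h^2 / 2) {0..h}"
    unfolding e_def using \<open>0 < h\<close> by (intro has_integral_inverse_sqrt_plus_linear) simp
  have "(l has_integral A^3 * h / 4 * (A * h) - (2 * (A^4 * h / 16) * h + A^4 * h / 32 * h + h^2 / 2)) {0..h}"
    unfolding l_def by (intro has_integral_diff has_integral_mult_right g_int e_int)
  then have l_int: "(l has_integral 3 * A^4 * h^2 / 32 - h^2 / 2) {0..h}"
    by (simp add: power2_eq_square power3_eq_cube power4_eq_xxxx field_simps)
  have "e absolutely_integrable_on {0..h}"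
    using e_int A_pos \<open>0 < h\<close> by (intro nonnegative_absolutely_integrable_1) (auto simp: e_def)
  then have l_abs: "l absolutely_integrable_on {0..h}"
    unfolding l_def using g_abs by (intro set_integral_diff set_integrable_mult_right)
  have "AE x in lebesgue. x \<notin> N \<union> {0, h}"
    using \<open>negligible N\<close> by (intro AE_not_in) (simp add: negligible_iff_null_sets)
  then have "AE x in lebesgue. x \<in> {0..h} \<longrightarrow> l x \<le> x * ((\<Phi> x)\<^sup>2 - 1)\<^sup>2"
  proof (eventually_elim, intro impI)
    fix x assume "x \<notin> N \<union> {0, h}" "x \<in> {0..h}"
    then have "x \<in> {0<..<h} - N"
      by auto
    then show "l x \<le> x * ((\<Phi> x)\<^sup>2 - 1)\<^sup>2"
      unfolding l_def e_def using \<open>0 < h\<close> A_pos g_le \<Phi>_nonneg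
      by (intro weighted_defect_lower_bound) auto
  qed
  then show ?thesis
    by (rule has_integral_le_nn_set_integral[OF l_abs l_int])
qed

theorem lemma2p2:
  fixes f :: "real \<Rightarrow> 'a::euclidean_space" and h A L :: real
  assumes "h > 0"
    and "L-lipschitz_on {0..h} f"
    and "norm (f h - f 0) / h = A"
    and "A \<ge> 2"
  shows "(\<integral>\<^sup>+ x \<in> {0..h}. ennreal (x * ((norm (vector_derivative f (at x within {0..h})))\<^sup>2 - 1)\<^sup>2) \<partial>lebesgue)
           \<ge> ennreal (h\<^sup>2 * A ^ 4 / 16)"
proof -
  have A_pos: "0 < A"
    using assms(4) by simp
  have norm_diff: "norm (f h - f 0) = A * h"
    using assms(1,3) by (simp add: field_simps)
  define u where "u = sgn (f h - f 0)"
  have "f h - f 0 \<noteq> 0"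
    using norm_diff assms(1) A_pos by auto
  then have "norm u = 1" "(f h - f 0) \<bullet> u = A * h"
    unfolding u_def norm_diff[symmetric]
    by (simp_all add: norm_sgn sgn_div_norm inner_commute[of _ "f h - f 0"] dot_square_norm power2_eq_square)
  then obtain N g where "negligible N" "(g has_integral A * h) {0..h}"
    "g absolutely_integrable_on {0..h}"
    "\<And>x. x \<in> {0<..<h} - N \<Longrightarrow> g x \<le> norm (vector_derivative f (at x within {0..h}))"
    using lipschitz_directional_derivative_ae[OF assms(2), of u] assms(1) by auto
  then have "ennreal (3 * A^4 * h^2 / 32 - h^2 / 2) \<le>
      (\<integral>\<^sup>+ x \<in> {0..h}. ennreal (x * ((norm (vector_derivative f (at x within {0..h})))\<^sup>2 - 1)\<^sup>2) \<partial>lebesgue)"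
    using assms(1) A_pos by (intro majorant_defect_integral_lower_bound) auto
  moreover have "h\<^sup>2 * A^4 / 16 \<le> 3 * A^4 * h^2 / 32 - h^2 / 2"
    using mult_left_mono[OF power_mono[OF assms(4), of 4], of "h\<^sup>2"] by (simp add: algebra_simps)
  ultimately show ?thesis
    by (meson ennreal_leI order_trans)
qed

end
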